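(* Let $k\ge2$ be an integer. For each $t>0$, $\frac1n a_n(\delta_nt)-\mu_n(\delta_nt)\to0$ in $L^1$ as $n\to\infty$.
   Context: $\xi$ is an offspring law on $\{0,1,\dots\}$ with mean 1 and $0<\sigma^2:=\sum_{p\ge2}p(p-1)\xi(p)<\infty$; $T_n$ is a Galton--Watson tree with law $\xi$ conditioned to have $n$ vertices. Each vertex $v$ carries an independent rate-1 Poisson process $N_v$ and is removed at time $\eta_v=\inf\{t:N_v(t)=k\}$. $T_n(t)$ is the set of vertices $v$ such that neither $v$ nor any ancestor of $v$ has been removed by time $t$; $\mu_n(t)=\#T_n(t)/n$; $a_n(t)=\#\{v\in T_n(t):N_v(t)=0\}$; $\delta_n=\sigma^{1/k}n^{-1/(2k)}$. *)

theory Defs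
  imports "HOL-Probability.Probability" "HOL-Library.Sublist"
begin

datatype ptree = Node "ptree list"

fun children :: "ptree \<Rightarrow> ptree list" where
  "children (Node ts) = ts"

fun tsize :: "ptree \<Rightarrow> nat" where
  "tsize (Node ts) = 1 + sum_list (map tsize ts)"

text \<open>Vertices are addressed by Ulam--Harris words (paths from the root);
  the ancestors of a vertex v (including v) are exactly the prefixes of v.\<close>
fun verts :: "ptree \<Rightarrow> nat list set"
  and verts_from :: "nat \<Rightarrow> ptree list \<Rightarrow> nat list set" where
  "verts (Node ts) = insert [] (verts_from 0 ts)"
| "verts_from i [] = {}"
| "verts_from i (t # ts) = (\<lambda>w. i # w) ` verts t \<union> verts_from (Suc i) ts"

text \<open>Galton--Watson weight of a plane tree: product over vertices of xi(outdegree).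
  This is the probability that an (unconditioned) GW tree equals the given tree.\<close>
fun gw_weight :: "nat pmf \<Rightarrow> ptree \<Rightarrow> real" where
  "gw_weight \<xi> (Node ts) = pmf \<xi> (length ts) * prod_list (map (gw_weight \<xi>) ts)"

definition gw_size_prob :: "nat pmf \<Rightarrow> nat \<Rightarrow> real" where
  "gw_size_prob \<xi> n = (\<Sum>\<tau>\<in>{\<tau>. tsize \<tau> = n}. gw_weight \<xi> \<tau>)"

text \<open>Law of the GW tree conditioned to have n vertices (meaningful when gw_size_prob > 0).\<close>
definition cgw :: "nat pmf \<Rightarrow> nat \<Rightarrow> ptree pmf" where
  "cgw \<xi> n = embed_pmf (\<lambda>\<tau>. if tsize \<tau> = n then gw_weight \<xi> \<tau> / gw_size_prob \<xi> n else 0)"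

text \<open>Surviving vertices T(s), given the values N v = N_v(s) of the Poisson processes at time s:
  v is removed by time s iff eta_v \<le> s iff N_v(s) \<ge> k.\<close>
definition alive :: "nat \<Rightarrow> ptree \<Rightarrow> (nat list \<Rightarrow> nat) \<Rightarrow> nat list set" where
  "alive k \<tau> N = {v \<in> verts \<tau>. \<forall>u. prefix u v \<longrightarrow> N u < k}"

definition mu_frac :: "nat \<Rightarrow> nat \<Rightarrow> ptree \<Rightarrow> (nat list \<Rightarrow> nat) \<Rightarrow> real" where
  "mu_frac k n \<tau> N = real (card (alive k \<tau> N)) / real n"

definition a_count :: "nat \<Rightarrow> ptree \<Rightarrow> (nat list \<Rightarrow> nat) \<Rightarrow> nat" where
  "a_count k \<tau> N = card {v \<in> alive k \<tau> N. N v = 0}"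

definition sigma2 :: "nat pmf \<Rightarrow> real" where
  "sigma2 \<xi> = (\<Sum>p. real p * (real p - 1) * pmf \<xi> p)"

definition delta :: "nat pmf \<Rightarrow> nat \<Rightarrow> nat \<Rightarrow> real" where
  "delta \<xi> k n = sqrt (sigma2 \<xi>) powr (1 / real k) * real n powr (- 1 / (2 * real k))"

definition tree_marks :: "nat pmf \<Rightarrow> nat \<Rightarrow> real \<Rightarrow> (ptree \<times> (nat list \<Rightarrow> nat)) pmf" where
  "tree_marks \<xi> n s = do { \<tau> \<leftarrow> cgw \<xi> n; N \<leftarrow> Pi_pmf (verts \<tau>) 0 (\<lambda>_. poisson_pmf s); return_pmf (\<tau>, N) }"

definition L1_err :: "nat pmf \<Rightarrow> nat \<Rightarrow> real \<Rightarrow> nat \<Rightarrow> real" where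
  "L1_err \<xi> k t n = measure_pmf.expectation (tree_marks \<xi> n (delta \<xi> k n * t))
      (\<lambda>(\<tau>, N). \<bar>real (a_count k \<tau> N) / real n - mu_frac k n \<tau> N\<bar>)"

end

theory Submission
  imports Defs
begin

text \<open>Among the surviving vertices, the a_n ones whose clock has not yet rung are
  counted by both quantities; the gap \<mu>_n - a_n/n counts survivors whose clock has rung
  between 1 and k - 1 times. Each vertex has rung by time s with probability 1 - e^{-s} \<le> s,
  so, whatever the tree, the L1 error is at most \<delta>_n t \<rightarrow> 0.\<close>

lemma finite_verts_card_le_tsize:
  "finite (verts \<tau>) \<and> card (verts \<tau>) \<le> tsize \<tau>"
  "finite (verts_from i ts) \<and> card (verts_from i ts) \<le> sum_list (map tsize ts)"
proof (induction \<tau> and i ts rule: verts_verts_from.induct)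
  case (1 ts)
  then show ?case by (auto intro: order.trans[OF card_insert_le_m1] simp: card_insert_if)
next
  case (2 i)
  then show ?case by simp
next
  case (3 i t ts)
  have "card ((#) i ` verts t \<union> verts_from (Suc i) ts) \<le> card (verts t) + card (verts_from (Suc i) ts)"
    using card_Un_le card_image_le[of "verts t" "(#) i"] 3 by (meson add_right_mono order.trans)
  then show ?case using 3 by simp
qed

lemma gw_weight_nonneg: "0 \<le> gw_weight \<xi> \<tau>"
  by (induction \<tau>) (auto intro!: mult_nonneg_nonneg prod_list_nonneg)

lemma gw_size_prob_0: "gw_size_prob \<xi> 0 = 0"
proof -
  have "tsize \<tau> \<noteq> 0" for \<tau>
    by (cases \<tau>) simp
  then have "{\<tau>. tsize \<tau> = 0} = {}"
    by auto
  then show ?thesis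
    unfolding gw_size_prob_def by (simp only: sum.empty)
qed

lemma finite_tsize_eq_if_gw_size_prob_pos:
  "0 < gw_size_prob \<xi> n \<Longrightarrow> finite {\<tau>. tsize \<tau> = n}"
  \<comment> \<open>a sum over an infinite set is 0\<close>
  unfolding gw_size_prob_def by (metis less_irrefl sum.infinite)

lemma pmf_cgw:
  assumes "0 < gw_size_prob \<xi> n"
  shows "pmf (cgw \<xi> n) \<tau> = (if tsize \<tau> = n then gw_weight \<xi> \<tau> / gw_size_prob \<xi> n else 0)"
proof -
  define f where "f \<tau> = (if tsize \<tau> = n then gw_weight \<xi> \<tau> / gw_size_prob \<xi> n else 0)" for \<tau>
  have nonneg: "0 \<le> f \<tau>" for \<tau>
    using assms gw_weight_nonneg[of \<xi> \<tau>] by (simp add: f_def)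
  have "(\<integral>\<^sup>+\<tau>. ennreal (f \<tau>) \<partial>count_space UNIV) = (\<Sum>\<tau>\<in>{\<tau>. tsize \<tau> = n}. ennreal (f \<tau>))"
    using finite_tsize_eq_if_gw_size_prob_pos[OF assms] by (intro nn_integral_count_space') (auto simp: f_def)
  also have "\<dots> = ennreal (\<Sum>\<tau>\<in>{\<tau>. tsize \<tau> = n}. f \<tau>)"
    using nonneg by (simp add: sum_ennreal)
  also have "(\<Sum>\<tau>\<in>{\<tau>. tsize \<tau> = n}. f \<tau>) = 1"
    using assms by (simp add: f_def gw_size_prob_def sum_divide_distrib[symmetric])
  finally have "(\<integral>\<^sup>+\<tau>. ennreal (f \<tau>) \<partial>count_space UNIV) = 1"
    by simp
  with nonneg show ?thesis
    unfolding cgw_def f_def[symmetric] by (simp add: pmf_embed_pmf)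
qed

lemma set_pmf_cgw:
  "0 < gw_size_prob \<xi> n \<Longrightarrow> set_pmf (cgw \<xi> n) \<subseteq> {\<tau>. tsize \<tau> = n}"
  by (auto simp: set_pmf_eq pmf_cgw split: if_splits)

lemma card_alive_eq_a_count_add:
  assumes "finite (verts \<tau>)"
  shows "card (alive k \<tau> N) = a_count k \<tau> N + card {v \<in> alive k \<tau> N. N v \<noteq> 0}"
proof -
  have "finite (alive k \<tau> N)"
    using assms by (rule finite_subset[rotated]) (auto simp: alive_def)
  then show ?thesis
    unfolding a_count_def by (subst card_Un_disjoint[symmetric]) (auto intro: arg_cong[where f = card])
qed

lemma a_count_error_le:
  assumes "finite (verts \<tau>)"
  shows "\<bar>real (a_count k \<tau> N) / real n - mu_frac k n \<tau> N\<bar> \<le> real (card {v \<in> verts \<tau>. N v \<noteq> 0}) / real n"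
proof -
  have "card {v \<in> alive k \<tau> N. N v \<noteq> 0} \<le> card {v \<in> verts \<tau>. N v \<noteq> 0}"
    using assms by (intro card_mono) (auto simp: alive_def)
  then show ?thesis
    using card_alive_eq_a_count_add[OF assms, of k N]
    by (simp add: mu_frac_def diff_divide_distrib[symmetric] divide_right_mono)
qed

lemma nn_integral_card_Pi_pmf:
  assumes "finite V"
  shows "(\<integral>\<^sup>+N. of_nat (card {v \<in> V. P (N v)}) \<partial>Pi_pmf V d (\<lambda>_. p))
           = of_nat (card V) * emeasure (measure_pmf p) {x. P x}"
proof -
  have "(\<integral>\<^sup>+N. of_nat (card {v \<in> V. P (N v)}) \<partial>Pi_pmf V d (\<lambda>_. p))
          = (\<integral>\<^sup>+N. (\<Sum>v\<in>V. indicator {N. P (N v)} N) \<partial>Pi_pmf V d (\<lambda>_. p))"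
    using assms by (intro nn_integral_cong) (simp add: indicator_def sum.If_cases Int_def)
  also have "\<dots> = (\<Sum>v\<in>V. emeasure (Pi_pmf V d (\<lambda>_. p)) {N. P (N v)})"
    by (simp add: nn_integral_sum)
  also have "\<dots> = (\<Sum>v\<in>V. emeasure (map_pmf (\<lambda>N. N v) (Pi_pmf V d (\<lambda>_. p))) {x. P x})"
    by (simp add: vimage_def)
  also have "\<dots> = of_nat (card V) * emeasure (measure_pmf p) {x. P x}"
    using assms by (simp add: Pi_pmf_component)
  finally show ?thesis .
qed

lemma measure_poisson_pmf_pos:
  assumes "0 < s"
  shows "measure_pmf.prob (poisson_pmf s) {x. 0 < x} = 1 - exp (- s)"
proof -
  have "{x::nat. 0 < x} = space (measure_pmf (poisson_pmf s)) - {0}"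
    by auto
  then show ?thesis
    using assms by (simp only: measure_pmf.prob_compl sets_measure_pmf UNIV_I measure_pmf_single) simp
qed

lemma nn_integral_a_count_error_le:
  assumes "tsize \<tau> = n" "0 < s"
  shows "(\<integral>\<^sup>+N. ennreal \<bar>real (a_count k \<tau> N) / real n - mu_frac k n \<tau> N\<bar>
            \<partial>Pi_pmf (verts \<tau>) 0 (\<lambda>_. poisson_pmf s)) \<le> ennreal (1 - exp (- s))"
proof -
  let ?V = "verts \<tau>"
  have fin: "finite ?V" and card_le: "card ?V \<le> n"
    using finite_verts_card_le_tsize(1)[of \<tau>] assms(1) by auto
  have "(\<integral>\<^sup>+N. ennreal \<bar>real (a_count k \<tau> N) / real n - mu_frac k n \<tau> N\<bar>
            \<partial>Pi_pmf ?V 0 (\<lambda>_. poisson_pmf s))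
        \<le> (\<integral>\<^sup>+N. ennreal (1 / real n) * of_nat (card {v \<in> ?V. N v \<noteq> 0})
            \<partial>Pi_pmf ?V 0 (\<lambda>_. poisson_pmf s))"
    using a_count_error_le[OF fin]
    by (intro nn_integral_mono) (simp add: ennreal_of_nat_eq_real_of_nat ennreal_mult'[symmetric] ennreal_leI)
  also have "\<dots> = ennreal (1 / real n) * (of_nat (card ?V) * ennreal (1 - exp (- s)))"
    using fin assms(2)
    by (simp add: nn_integral_cmult nn_integral_card_Pi_pmf measure_pmf.emeasure_eq_measure
        measure_poisson_pmf_pos)
  also have "\<dots> = ennreal (real (card ?V) / real n * (1 - exp (- s)))"
    by (simp add: ennreal_of_nat_eq_real_of_nat ennreal_mult'[symmetric] ennreal_mult[symmetric])
  also have "\<dots> \<le> ennreal (1 - exp (- s))"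
    using card_le assms(2) by (intro ennreal_leI mult_left_le_one_le) (auto simp: divide_le_eq_1)
  finally show ?thesis .
qed

lemma L1_err_le:
  assumes "0 < gw_size_prob \<xi> n" "0 < delta \<xi> k n * t"
  shows "L1_err \<xi> k t n \<le> 1 - exp (- (delta \<xi> k n * t))"
proof -
  let ?s = "delta \<xi> k n * t"
  let ?err = "\<lambda>(\<tau>, N). \<bar>real (a_count k \<tau> N) / real n - mu_frac k n \<tau> N\<bar>"
  have "(\<integral>\<^sup>+x. ennreal (?err x) \<partial>tree_marks \<xi> n ?s)
      = (\<integral>\<^sup>+\<tau>. \<integral>\<^sup>+N. ennreal (?err (\<tau>, N)) \<partial>Pi_pmf (verts \<tau>) 0 (\<lambda>_. poisson_pmf ?s) \<partial>cgw \<xi> n)"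
    by (simp add: tree_marks_def)
  also have "\<dots> \<le> (\<integral>\<^sup>+\<tau>. ennreal (1 - exp (- ?s)) \<partial>cgw \<xi> n)"
    using set_pmf_cgw[OF assms(1)] nn_integral_a_count_error_le[OF _ assms(2)]
    by (intro nn_integral_mono_AE) (auto simp: AE_measure_pmf_iff)
  also have "\<dots> = ennreal (1 - exp (- ?s))"
    by (simp add: measure_pmf.emeasure_space_1)
  finally have nn_integral_le: "(\<integral>\<^sup>+x. ennreal (?err x) \<partial>tree_marks \<xi> n ?s) \<le> ennreal (1 - exp (- ?s))" .
  have L1_err_eq: "L1_err \<xi> k t n = enn2real (\<integral>\<^sup>+x. ennreal (?err x) \<partial>tree_marks \<xi> n ?s)"
    unfolding L1_err_def by (rule integral_eq_nn_integral) auto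
  show ?thesis
    unfolding L1_err_eq using assms(2) by (intro enn2real_leI[OF _ nn_integral_le]) simp
qed

lemma L1_err_nonneg: "0 \<le> L1_err \<xi> k t n"
  unfolding L1_err_def by (intro Bochner_Integration.integral_nonneg) (simp add: split_beta)

lemma delta_pos: "0 < sigma2 \<xi> \<Longrightarrow> 0 < n \<Longrightarrow> 0 < delta \<xi> k n"
  by (simp add: delta_def)

lemma delta_tendsto_zero:
  assumes "0 < k"
  shows "delta \<xi> k \<longlonglongrightarrow> 0"
proof -
  have "(\<lambda>n. real n powr (- 1 / (2 * real k))) \<longlonglongrightarrow> 0"
    using assms by (intro tendsto_neg_powr filterlim_real_sequentially) simp
  then show ?thesis
    unfolding delta_def by (rule tendsto_mult_right_zero)
qed

theorem lemma7:
  fixes \<xi> :: "nat pmf" and k :: nat and t :: real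
  assumes "k \<ge> 2"
    and "(\<lambda>p. real p * pmf \<xi> p) sums 1"
    and "summable (\<lambda>p. real p * (real p - 1) * pmf \<xi> p)"
    and "0 < sigma2 \<xi>"
    and "0 < t"
  shows "filterlim (L1_err \<xi> k t) (nhds 0)
           (sequentially \<sqinter> principal {n. 0 < gw_size_prob \<xi> n})"
proof (rule tendsto_sandwich[of "\<lambda>_. 0" _ _ "\<lambda>n. delta \<xi> k n * t"])
  let ?F = "sequentially \<sqinter> principal {n. 0 < gw_size_prob \<xi> n}"
  have "L1_err \<xi> k t n \<le> delta \<xi> k n * t" if "0 < gw_size_prob \<xi> n" for n
  proof -
    have "0 < n"
      using that gw_size_prob_0[of \<xi>] by (cases n) auto
    then have "0 < delta \<xi> k n * t"
      using assms(4,5) delta_pos by simp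
    then show ?thesis
      using L1_err_le[OF that, of k t] exp_ge_add_one_self[of "- (delta \<xi> k n * t)"] by linarith
  qed
  then show "\<forall>\<^sub>F n in ?F. L1_err \<xi> k t n \<le> delta \<xi> k n * t"
    by (auto simp: eventually_inf_principal)
  show "\<forall>\<^sub>F n in ?F. 0 \<le> L1_err \<xi> k t n"
    by (simp add: L1_err_nonneg)
  have "(\<lambda>n. delta \<xi> k n * t) \<longlonglongrightarrow> 0"
    using assms(1) by (intro tendsto_mult_left_zero delta_tendsto_zero) simp
  then show "((\<lambda>n. delta \<xi> k n * t) \<longlongrightarrow> 0) ?F"
    by (rule tendsto_mono[OF inf_le1])
qed simp

end
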